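(* Let $K$ be a pathwise connected poset. (i) $(\Lambda,\lambda)_K$ is a net bundle of discrete groups and $(\Lambda^l,\lambda)_K$ is a net of discrete groups, and the inclusions $i_o:\Lambda^l_o\to\Lambda_o$ define a monomorphism $i:(\Lambda^l,\lambda)_K\to(\Lambda,\lambda)_K$. (ii) If $K$ has a symmetry group $G$, then, with the actions $g_*$, both nets are $G$-covariant and $i$ is a monomorphism of $G$-covariant nets.
   Context: Simplices and paths. For a poset $K$: $0$-simplices are elements of $K$; an $n$-simplex $x$ ($n\ge1$) consists of $(n-1)$-simplices $\partial_0x,\dots,\partial_nx$ and a support $|x|\in K$ with $|\partial_ix|\le|x|$. The opposite $\overline b$ of a $1$-simplex $b$ has the same support and swapped faces. $\iota_a$ is the degenerate $1$-simplex at $a$ (faces and support $a$). For $a\le o$, $(oa)$ is the $1$-simplex with $\partial_1=a$, $\partial_0=o$, support $o$. A path $p=b_n*\cdots*b_1$ is a concatenation of $1$-simplices with $\partial_0b_i=\partial_1b_{i+1}$; its support $|p|$ is the set of supports of the $b_i$; the opposite path is $\overline p=\overline{b_1}*\cdots*\overline{b_n}$. $K$ is pathwise connected if any two elements are joined by a path. $w$-equivalence: two paths with the same endpoints are $w$-equivalent if one is obtained from the other by finitely many of the following moves or their inverses: (1) inserting a degenerate $1$-simplex $\iota_a$; (2) replacing $(oa)*(ae)$ by $(oe)$ for $e\le a\le o$; (3) replacing $\overline b*b$ by $\iota_{\partial_1b}$. Write $[p]_w$ for the class. Groups of loops: $\Lambda_o$ is the set of $w$-classes of loops over $o$ with product $[p]_w[q]_w=[p*q]_w$;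 $\Lambda^l_o\subseteq\Lambda_o$ consists of classes containing some path whose support is contained in $o$ (i.e. all supports $\le o$). For $o\le a$, $\lambda_{ao}([p]_w):=[(ao)*p*\overline{(ao)}]_w$. Nets of groups: a net of discrete groups $(\mathcal G,\jmath)_K$ assigns groups $\mathcal G_o$ and injective homomorphisms $\jmath_{ao}:\mathcal G_o\to\mathcal G_a$ ($o\le a$) with $\jmath_{eo}=\jmath_{ea}\circ\jmath_{ao}$; a net bundle if all $\jmath_{ao}$ are isomorphisms; a monomorphism (over $\mathrm{id}_K$) is a family of injective homomorphisms commuting with the inclusions. Symmetry: a symmetry group $G$ of $K$ is a group acting on $K$ by order automorphisms (injectively into $\mathrm{Aut}(K)$); it acts on simplices by $gx$ with faces $g\partial_ix$ and support $g|x|$, and on paths simplexwise; $g_*([p]_w):=[gp]_w$. A net is $G$-covariant if there are isomorphisms $\alpha^g_o:\mathcal G_o\to\mathcal G_{go}$ with $\alpha^h_{go}\circ\alpha^g_o=\alpha^{hg}_o$ and $\alpha^g_o\circ\jmath_{oa}=\jmath_{go\,ga}\circ\alpha^g_a$; a morphism $\phi$ of $G$-covariant nets satisfies $\beta^g_o\circ\phi_o=\phi_{go}\circ\alpha^g_o$. *)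

theory Defs
  imports "HOL-Algebra.Group_Action"
begin

text \<open>A 1-simplex of a poset is encoded as a triple (d0, d1, support).
  A path b_n * ... * b_1 is encoded as the nonempty list [b_n, ..., b_1]
  (written order), so that the concatenation p * q is p @ q.\<close>

type_synonym 'k simp1 = "'k \<times> 'k \<times> 'k"

definition d0 :: "'k simp1 \<Rightarrow> 'k" where "d0 b = fst b"
definition d1 :: "'k simp1 \<Rightarrow> 'k" where "d1 b = fst (snd b)"
definition supp :: "'k simp1 \<Rightarrow> 'k" where "supp b = snd (snd b)"

definition is_simp1 :: "'k::order simp1 \<Rightarrow> bool" where
  "is_simp1 b \<longleftrightarrow> d0 b \<le> supp b \<and> d1 b \<le> supp b"

definition opp :: "'k simp1 \<Rightarrow> 'k simp1" where
  "opp b = (d1 b, d0 b, supp b)"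

definition iota :: "'k \<Rightarrow> 'k simp1" where
  "iota a = (a, a, a)"

text \<open>edge o a is the 1-simplex (oa): d1 = a, d0 = o, support o (for a \<le> o).\<close>
definition edge :: "'k \<Rightarrow> 'k \<Rightarrow> 'k simp1" where
  "edge o' a = (o', a, o')"

definition is_path :: "'k::order simp1 list \<Rightarrow> bool" where
  "is_path p \<longleftrightarrow> p \<noteq> [] \<and> (\<forall>b\<in>set p. is_simp1 b) \<and>
     (\<forall>i. Suc i < length p \<longrightarrow> d1 (p ! i) = d0 (p ! Suc i))"

definition pstart :: "'k simp1 list \<Rightarrow> 'k" where "pstart p = d1 (last p)"
definition pend :: "'k simp1 list \<Rightarrow> 'k" where "pend p = d0 (hd p)"

definition opp_path :: "'k simp1 list \<Rightarrow> 'k simp1 list" where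
  "opp_path p = rev (map opp p)"

definition path_connected_poset :: "'k::order itself \<Rightarrow> bool" where
  "path_connected_poset _ \<longleftrightarrow>
     (\<forall>a b :: 'k. \<exists>p. is_path p \<and> pstart p = a \<and> pend p = b)"

definition wstep :: "'k::order simp1 list \<Rightarrow> 'k simp1 list \<Rightarrow> bool" where
  "wstep p q \<longleftrightarrow> is_path p \<and> is_path q \<and> pstart p = pstart q \<and> pend p = pend q \<and>
    ((\<exists>xs ys a. p = xs @ ys \<and> q = xs @ [iota a] @ ys) \<or>
     (\<exists>xs ys o' a e. e \<le> a \<and> a \<le> o' \<and>
         p = xs @ [edge o' a, edge a e] @ ys \<and> q = xs @ [edge o' e] @ ys) \<or>
     (\<exists>xs ys b. p = xs @ [opp b, b] @ ys \<and> q = xs @ [iota (d1 b)] @ ys))"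

definition weq :: "'k::order simp1 list \<Rightarrow> 'k simp1 list \<Rightarrow> bool" where
  "weq = (symclp wstep)\<^sup>*\<^sup>*"

definition wclass :: "'k::order simp1 list \<Rightarrow> 'k simp1 list set" where
  "wclass p = {q. weq p q}"

definition loops :: "'k::order \<Rightarrow> 'k simp1 list set" where
  "loops o' = {p. is_path p \<and> pstart p = o' \<and> pend p = o'}"

definition Lambda :: "'k::order \<Rightarrow> 'k simp1 list set monoid" where
  "Lambda o' = \<lparr> carrier = wclass ` loops o',
                mult = (\<lambda>A B. {r. \<exists>p\<in>A. \<exists>q\<in>B. weq (p @ q) r}),
                one = wclass [iota o'] \<rparr>"

definition LambdaL :: "'k::order \<Rightarrow> 'k simp1 list set monoid" where
  "LambdaL o' = (Lambda o')\<lparr> carrier :=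
      {A \<in> carrier (Lambda o'). \<exists>p\<in>A. \<forall>b\<in>set p. supp b \<le> o'} \<rparr>"

definition lam :: "'k::order \<Rightarrow> 'k \<Rightarrow> 'k simp1 list set \<Rightarrow> 'k simp1 list set" where
  "lam a o' A = {r. \<exists>p\<in>A. weq ([edge a o'] @ p @ [opp (edge a o')]) r}"

definition symmetry_group :: "('g, 'b) monoid_scheme \<Rightarrow> ('g \<Rightarrow> 'k::order \<Rightarrow> 'k) \<Rightarrow> bool" where
  "symmetry_group G \<phi> \<longleftrightarrow> group G \<and> group_action G UNIV \<phi> \<and>
     (\<forall>g\<in>carrier G. \<forall>x y. x \<le> y \<longleftrightarrow> \<phi> g x \<le> \<phi> g y) \<and> inj_on \<phi> (carrier G)"

definition simp_act :: "('k \<Rightarrow> 'k) \<Rightarrow> 'k simp1 \<Rightarrow> 'k simp1" where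
  "simp_act f b = (f (d0 b), f (d1 b), f (supp b))"

definition gstar :: "('k::order \<Rightarrow> 'k) \<Rightarrow> 'k simp1 list set \<Rightarrow> 'k simp1 list set" where
  "gstar f A = {r. \<exists>p\<in>A. weq (map (simp_act f) p) r}"

end

theory Submission
  imports Defs
begin

text \<open>Conjugation by a path c from o to a, [p] \<mapsto> [c * p * opp c], is a well-defined
  isomorphism of loop groups, because opp c * c is w-equivalent to a degenerate simplex.
  The map lam a o is conjugation by the single simplex (ao), and the elementary move
  (ea) * (ao) \<leadsto> (eo) makes it compatible with composition. Conjugation by (ao) keeps
  supports below a, so lam restricts to the loops supported in o. An order automorphism f
  maps simplices to simplices and elementary moves to elementary moves, so it induces an
  isomorphism g_* of loop groups with inverse induced by the inverse of f, and it commutes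
  with lam because f maps the simplex (ao) to (f(a) f(o)).\<close>

lemma is_path_nonempty: "is_path p \<Longrightarrow> p \<noteq> []"
  by (simp add: is_path_def)

lemma is_path_singleton [simp]: "is_path [b] \<longleftrightarrow> is_simp1 b"
  by (simp add: is_path_def)

lemma is_path_Cons:
  assumes "xs \<noteq> []"
  shows "is_path (x # xs) \<longleftrightarrow> is_simp1 x \<and> d1 x = d0 (hd xs) \<and> is_path xs"
proof -
  have "(\<forall>i. Suc i < length (x # xs) \<longrightarrow> d1 ((x # xs) ! i) = d0 ((x # xs) ! Suc i)) \<longleftrightarrow>
        d1 x = d0 (hd xs) \<and> (\<forall>i. Suc i < length xs \<longrightarrow> d1 (xs ! i) = d0 (xs ! Suc i))"
    (is "?L \<longleftrightarrow> ?R")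
  proof
    assume L: ?L
    then have "d1 x = d0 (hd xs)" using assms by (auto simp: hd_conv_nth)
    moreover have "\<forall>i. Suc i < length xs \<longrightarrow> d1 (xs ! i) = d0 (xs ! Suc i)"
      using L by (metis Suc_less_eq length_Cons nth_Cons_Suc)
    ultimately show ?R by blast
  next
    assume ?R
    then show ?L using assms by (auto simp: hd_conv_nth nth_Cons split: nat.split)
  qed
  then show ?thesis unfolding is_path_def using assms by auto
qed

lemma pstart_Cons [simp]: "xs \<noteq> [] \<Longrightarrow> pstart (x # xs) = pstart xs"
  by (simp add: pstart_def)

lemma pend_Cons [simp]: "pend (x # xs) = d0 x"
  by (simp add: pend_def)

lemma pstart_append [simp]: "ys \<noteq> [] \<Longrightarrow> pstart (xs @ ys) = pstart ys"
  by (simp add: pstart_def)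

lemma pend_append [simp]: "xs \<noteq> [] \<Longrightarrow> pend (xs @ ys) = pend xs"
  by (simp add: pend_def)

lemma pstart_append_path [simp]: "is_path ys \<Longrightarrow> pstart (xs @ ys) = pstart ys"
  by (simp add: is_path_nonempty)

lemma pend_append_path [simp]: "is_path xs \<Longrightarrow> pend (xs @ ys) = pend xs"
  by (simp add: is_path_nonempty)

lemma is_path_append:
  "xs \<noteq> [] \<Longrightarrow> ys \<noteq> [] \<Longrightarrow> is_path (xs @ ys) \<longleftrightarrow> is_path xs \<and> is_path ys \<and> pstart xs = pend ys"
proof (induction xs)
  case (Cons x xs)
  then show ?case
    by (cases "xs = []") (auto simp: is_path_Cons pstart_def pend_def)
qed simp

lemma is_path_appendI: "is_path xs \<Longrightarrow> is_path ys \<Longrightarrow> pstart xs = pend ys \<Longrightarrow> is_path (xs @ ys)"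
  by (simp add: is_path_append is_path_nonempty)

lemma iota_faces [simp]: "d0 (iota a) = a" "d1 (iota a) = a" "supp (iota a) = a"
  by (simp_all add: iota_def d0_def d1_def supp_def)

lemma is_simp1_iota [simp]: "is_simp1 (iota a)"
  by (simp add: is_simp1_def)

lemma opp_faces [simp]: "d0 (opp b) = d1 b" "d1 (opp b) = d0 b" "supp (opp b) = supp b"
  by (simp_all add: opp_def d0_def d1_def supp_def)

lemma is_simp1_opp [simp]: "is_simp1 (opp b) \<longleftrightarrow> is_simp1 b"
  by (auto simp: is_simp1_def)

lemma edge_faces [simp]: "d0 (edge o' a) = o'" "d1 (edge o' a) = a" "supp (edge o' a) = o'"
  by (simp_all add: edge_def d0_def d1_def supp_def)

lemma is_simp1_edge [simp]: "a \<le> o' \<Longrightarrow> is_simp1 (edge o' a)"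
  by (simp add: is_simp1_def)

lemma opp_opp [simp]: "opp (opp b) = b"
  by (simp add: opp_def d0_def d1_def supp_def)

lemma opp_path_Nil [simp]: "opp_path [] = []"
  by (simp add: opp_path_def)

lemma opp_path_Cons [simp]: "opp_path (x # xs) = opp_path xs @ [opp x]"
  by (simp add: opp_path_def)

lemma opp_path_append [simp]: "opp_path (xs @ ys) = opp_path ys @ opp_path xs"
  by (simp add: opp_path_def)

lemma opp_path_opp_path [simp]: "opp_path (opp_path p) = p"
  by (simp add: opp_path_def rev_map comp_def)

lemma opp_path_eq_Nil_iff [simp]: "opp_path p = [] \<longleftrightarrow> p = []"
  by (simp add: opp_path_def)

lemma set_opp_path [simp]: "set (opp_path p) = opp ` set p"
  by (simp add: opp_path_def)

lemma pstart_opp_path [simp]: "p \<noteq> [] \<Longrightarrow> pstart (opp_path p) = pend p"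
  by (simp add: opp_path_def pstart_def pend_def last_rev hd_map)

lemma pend_opp_path [simp]: "p \<noteq> [] \<Longrightarrow> pend (opp_path p) = pstart p"
  by (simp add: opp_path_def pstart_def pend_def hd_rev last_map)

lemma is_path_opp_path: "is_path p \<Longrightarrow> is_path (opp_path p)"
proof (induction p)
  case (Cons x xs)
  then show ?case
    by (cases "xs = []") (auto simp: is_path_Cons is_path_append pend_def)
qed (simp add: is_path_def)

section \<open>w-equivalence\<close>

lemma wstep_imp_path:
  "wstep p q \<Longrightarrow> is_path p \<and> is_path q \<and> pstart p = pstart q \<and> pend p = pend q"
  by (simp add: wstep_def)

lemma wstep_insert_iotaI:
  "\<lbrakk>is_path p; is_path q; pstart p = pstart q; pend p = pend q;
    p = xs @ ys; q = xs @ [iota a] @ ys\<rbrakk> \<Longrightarrow> wstep p q"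
  unfolding wstep_def by blast

lemma wstep_edge_edgeI:
  "\<lbrakk>is_path p; is_path q; pstart p = pstart q; pend p = pend q; e \<le> a; a \<le> o';
    p = xs @ [edge o' a, edge a e] @ ys; q = xs @ [edge o' e] @ ys\<rbrakk> \<Longrightarrow> wstep p q"
  unfolding wstep_def by blast

lemma wstep_opp_cancelI:
  "\<lbrakk>is_path p; is_path q; pstart p = pstart q; pend p = pend q;
    p = xs @ [opp b, b] @ ys; q = xs @ [iota (d1 b)] @ ys\<rbrakk> \<Longrightarrow> wstep p q"
  unfolding wstep_def by blast

lemma wstepE:
  assumes "wstep p q"
  obtains (iota) xs ys a where "p = xs @ ys" "q = xs @ [iota a] @ ys"
    | (edge) xs ys o' a e where "e \<le> a" "a \<le> o'" "p = xs @ [edge o' a, edge a e] @ ys"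
        "q = xs @ [edge o' e] @ ys"
    | (opp) xs ys b where "p = xs @ [opp b, b] @ ys" "q = xs @ [iota (d1 b)] @ ys"
  using assms unfolding wstep_def by (elim conjE disjE exE) (rule that; assumption)+

lemma weq_refl [simp]: "weq p p"
  by (simp add: weq_def)

lemma weq_sym: "weq p q \<Longrightarrow> weq q p"
  unfolding weq_def by (rule rtranclp_symclp_sym)

lemma weq_trans: "weq p q \<Longrightarrow> weq q r \<Longrightarrow> weq p r"
  unfolding weq_def by (rule rtranclp_trans)

lemma wstep_imp_weq: "wstep p q \<Longrightarrow> weq p q"
  unfolding weq_def by (simp add: r_into_rtranclp)

lemma wstep_imp_weq_converse: "wstep q p \<Longrightarrow> weq p q"
  unfolding weq_def by (simp add: r_into_rtranclp)

lemma weq_imp_path: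
  "weq p q \<Longrightarrow> is_path p \<Longrightarrow> is_path q \<and> pstart q = pstart p \<and> pend q = pend p"
  unfolding weq_def
proof (induction rule: rtranclp_induct)
  case (step y z)
  then show ?case by (auto simp: symclp_def dest!: wstep_imp_path)
qed simp

lemma is_path_replace_middle:
  assumes "is_path p" "is_path q" "pstart p = pstart q" "pend p = pend q" "is_path (l @ p @ r)"
  shows "is_path (l @ q @ r) \<and> pstart (l @ q @ r) = pstart (l @ p @ r) \<and> pend (l @ q @ r) = pend (l @ p @ r)"
  using assms is_path_nonempty[of p] is_path_nonempty[of q]
  by (cases "l = []"; cases "r = []") (simp_all add: is_path_append)

lemma wstep_in_context:
  assumes "wstep p q" "is_path (l @ p @ r)"
  shows "wstep (l @ p @ r) (l @ q @ r)"
proof -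
  have pq: "is_path p" "is_path q" "pstart p = pstart q" "pend p = pend q"
    using wstep_imp_path[OF assms(1)] by auto
  have paths: "is_path (l @ q @ r)" "pstart (l @ p @ r) = pstart (l @ q @ r)"
      "pend (l @ p @ r) = pend (l @ q @ r)"
    using is_path_replace_middle[OF pq assms(2)] by auto
  from assms(1) show ?thesis
  proof (cases rule: wstepE)
    case (iota xs ys a)
    then show ?thesis
      using paths assms(2) by (intro wstep_insert_iotaI[where xs="l @ xs" and ys="ys @ r"]) simp_all
  next
    case (edge xs ys o' a e)
    then show ?thesis
      using paths assms(2) by (intro wstep_edge_edgeI[where xs="l @ xs" and ys="ys @ r"]) simp_all
  next
    case (opp xs ys b)
    then show ?thesis
      using paths assms(2) by (intro wstep_opp_cancelI[where xs="l @ xs" and ys="ys @ r"]) simp_all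
  qed
qed

lemma weq_in_context:
  assumes "weq p q" "is_path p" "is_path (l @ p @ r)"
  shows "weq (l @ p @ r) (l @ q @ r)"
  using assms(1) unfolding weq_def
proof (induction rule: rtranclp_induct)
  case (step y z)
  have y: "is_path y" "pstart y = pstart p" "pend y = pend p"
    using weq_imp_path[OF step.hyps(1)[folded weq_def] assms(2)] by auto
  have ly: "is_path (l @ y @ r)"
    using is_path_replace_middle[OF assms(2) y(1) y(2)[symmetric] y(3)[symmetric] assms(3)] by simp
  from step.hyps(2) have "symclp wstep (l @ y @ r) (l @ z @ r)"
  proof (cases rule: symclpE)
    case base
    then show ?thesis using wstep_in_context[OF base ly] by (simp add: symclp_def)
  next
    case sym
    then have z: "is_path z" "pstart y = pstart z" "pend y = pend z"
      by (auto dest: wstep_imp_path)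
    have "is_path (l @ z @ r)"
      using is_path_replace_middle[OF y(1) z ly] by simp
    then show ?thesis using wstep_in_context[OF sym] by (simp add: symclp_def)
  qed
  then show ?case using step.IH by (simp add: rtranclp.rtrancl_into_rtrancl)
qed simp

lemma weq_append:
  assumes "weq p p'" "weq q q'" "is_path p" "is_path q" "pstart p = pend q"
  shows "weq (p @ q) (p' @ q')"
proof -
  have "is_path (p @ q)"
    using assms by (simp add: is_path_appendI)
  then have "weq (p @ q) (p' @ q)"
    using weq_in_context[of p p' "[]" q] assms by simp
  moreover have "is_path (p' @ q)"
    using weq_imp_path[OF assms(1,3)] assms by (auto intro: is_path_appendI)
  then have "weq (p' @ q) (p' @ q')"
    using weq_in_context[of q q' p' "[]"] assms by simp
  ultimately show ?thesis by (rule weq_trans)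
qed

lemma weq_iota_left: "is_path p \<Longrightarrow> weq ([iota (pend p)] @ p) p"
  by (rule wstep_imp_weq_converse, rule wstep_insert_iotaI[where xs="[]" and ys=p])
    (auto simp: is_path_Cons is_path_nonempty pend_def)

lemma weq_iota_right: "is_path p \<Longrightarrow> weq (p @ [iota (pstart p)]) p"
  by (rule wstep_imp_weq_converse, rule wstep_insert_iotaI[where xs=p and ys="[]"])
    (auto simp: is_path_append is_path_nonempty pstart_def)

lemma weq_opp_cancel: "is_simp1 b \<Longrightarrow> weq [b, opp b] [iota (d0 b)]"
  by (rule wstep_imp_weq, rule wstep_opp_cancelI[where xs="[]" and ys="[]" and b="opp b"])
    (auto simp: is_path_Cons pstart_def pend_def)

lemma weq_append_opp_path: "is_path p \<Longrightarrow> weq (p @ opp_path p) [iota (pend p)]"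
proof (induction p)
  case (Cons x xs)
  show ?case
  proof (cases "xs = []")
    case True
    then show ?thesis using Cons.prems weq_opp_cancel by simp
  next
    case False
    then have x: "is_simp1 x" "d1 x = d0 (hd xs)" and xs: "is_path xs"
      using Cons.prems by (simp_all add: is_path_Cons)
    have xs_opp: "is_path (xs @ opp_path xs)"
      using xs False by (simp add: is_path_appendI is_path_opp_path)
    have "is_path ([x] @ (xs @ opp_path xs) @ [opp x])"
      using Cons.prems False xs_opp x
      by (simp add: is_path_append is_path_opp_path is_path_Cons pend_def)
    then have "weq ([x] @ (xs @ opp_path xs) @ [opp x]) ([x] @ [iota (pend xs)] @ [opp x])"
      using weq_in_context[OF Cons.IH[OF xs] xs_opp] by blast
    moreover have "weq ([x] @ [iota (pend xs)] @ [opp x]) [x, opp x]"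
      by (rule wstep_imp_weq_converse, rule wstep_insert_iotaI[where xs="[x]" and ys="[opp x]"])
        (use x xs False in \<open>auto simp: is_path_Cons pstart_def pend_def\<close>)
    ultimately show ?thesis
      using weq_opp_cancel[OF x(1)] by (auto intro: weq_trans)
  qed
qed (simp add: is_path_def)

lemma weq_opp_path_append: "is_path p \<Longrightarrow> weq (opp_path p @ p) [iota (pstart p)]"
  using weq_append_opp_path[of "opp_path p"] is_path_opp_path[of p] is_path_nonempty[of p] by simp

lemma weq_cancel_right:
  assumes "is_path x" "is_path c" "pstart x = pend c"
  shows "weq (x @ c @ opp_path c) x"
proof -
  have cc: "is_path (c @ opp_path c)"
    using assms(2) by (simp add: is_path_appendI is_path_opp_path is_path_nonempty)
  then have "is_path (x @ (c @ opp_path c) @ [])"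
    using assms by (simp add: is_path_appendI)
  then have "weq (x @ (c @ opp_path c) @ []) (x @ [iota (pend c)] @ [])"
    using weq_in_context[OF weq_append_opp_path[OF assms(2)] cc] by blast
  then show ?thesis
    using weq_iota_right[OF assms(1)] assms(3) by (auto intro: weq_trans)
qed

lemma weq_cancel_left:
  assumes "is_path c" "is_path x" "pstart c = pend x"
  shows "weq (opp_path c @ c @ x) x"
proof -
  have cc: "is_path (opp_path c @ c)"
    using assms(1) by (simp add: is_path_appendI is_path_opp_path is_path_nonempty)
  have "is_path (c @ x)"
    using assms by (simp add: is_path_appendI)
  then have "is_path ([] @ (opp_path c @ c) @ x)"
    using assms is_path_appendI[OF is_path_opp_path[OF assms(1)]] by (simp add: is_path_nonempty)
  then have "weq ([] @ (opp_path c @ c) @ x) ([] @ [iota (pstart c)] @ x)"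
    using weq_in_context[OF weq_opp_path_append[OF assms(1)] cc] by blast
  then show ?thesis
    using weq_iota_left[OF assms(2)] assms(3) by (auto intro: weq_trans)
qed

lemma weq_opp_path:
  assumes "weq p q" "is_path p"
  shows "weq (opp_path p) (opp_path q)"
proof -
  have q: "is_path q" "pstart q = pstart p" "pend q = pend p"
    using weq_imp_path[OF assms] by auto
  have ne: "p \<noteq> []" "q \<noteq> []"
    using q(1) assms(2) by (simp_all add: is_path_nonempty)
  have "weq (opp_path p) (opp_path q @ q @ opp_path p)"
    using weq_cancel_left[OF q(1) is_path_opp_path[OF assms(2)]] q ne by (simp add: weq_sym)
  moreover have "is_path (opp_path q @ q @ opp_path p)"
    using q ne assms(2) by (simp add: is_path_appendI is_path_opp_path)
  then have "weq (opp_path q @ q @ opp_path p) (opp_path q @ p @ opp_path p)"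
    using weq_in_context[OF weq_sym[OF assms(1)] q(1)] by simp
  moreover have "weq (opp_path q @ p @ opp_path p) (opp_path q)"
    using weq_cancel_right[OF is_path_opp_path[OF q(1)] assms(2)] q ne by simp
  ultimately show ?thesis by (blast intro: weq_trans)
qed

section \<open>The groups of loops\<close>

lemma mem_wclass: "q \<in> wclass p \<longleftrightarrow> weq p q"
  by (simp add: wclass_def)

lemma wclass_eq_iff: "wclass p = wclass q \<longleftrightarrow> weq p q"
proof
  assume "wclass p = wclass q"
  then have "q \<in> wclass p" by (simp add: mem_wclass)
  then show "weq p q" by (simp add: mem_wclass)
qed (auto simp: wclass_def intro: weq_trans weq_sym)

lemma wclass_eqI: "weq p q \<Longrightarrow> wclass p = wclass q"
  by (simp add: wclass_eq_iff)

lemma pointwise_image_wclass: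
  assumes "\<And>q. weq p q \<Longrightarrow> weq (f p) (f q)"
  shows "{r. \<exists>q\<in>wclass p. weq (f q) r} = wclass (f p)"
proof (rule Set.set_eqI, rule iffI)
  fix r assume "r \<in> {r. \<exists>q\<in>wclass p. weq (f q) r}"
  then obtain q where "weq p q" "weq (f q) r"
    by (auto simp: mem_wclass)
  then show "r \<in> wclass (f p)"
    using assms weq_trans by (auto simp: mem_wclass)
qed (auto simp: mem_wclass)

lemma loops_iff: "p \<in> loops o' \<longleftrightarrow> is_path p \<and> pstart p = o' \<and> pend p = o'"
  by (simp add: loops_def)

lemma append_loops: "p \<in> loops o' \<Longrightarrow> q \<in> loops o' \<Longrightarrow> p @ q \<in> loops o'"
  by (auto simp: loops_iff intro: is_path_appendI)

lemma iota_loops: "[iota o'] \<in> loops o'"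
  by (simp add: loops_iff pstart_def pend_def)

lemma opp_path_loops: "p \<in> loops o' \<Longrightarrow> opp_path p \<in> loops o'"
  by (auto simp: loops_iff is_path_opp_path is_path_nonempty)

lemma carrier_Lambda: "carrier (Lambda o') = wclass ` loops o'"
  by (simp add: Lambda_def)

lemma one_Lambda: "\<one>\<^bsub>Lambda o'\<^esub> = wclass [iota o']"
  by (simp add: Lambda_def)

lemma mult_Lambda_wclass:
  assumes "is_path p" "is_path q" "pstart p = pend q"
  shows "wclass p \<otimes>\<^bsub>Lambda a\<^esub> wclass q = wclass (p @ q)"
proof -
  have "{r. \<exists>p'\<in>wclass p. \<exists>q'\<in>wclass q. weq (p' @ q') r} = wclass (p @ q)"
  proof (rule Set.set_eqI, rule iffI)
    fix r assume "r \<in> {r. \<exists>p'\<in>wclass p. \<exists>q'\<in>wclass q. weq (p' @ q') r}"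
    then obtain p' q' where "weq p p'" "weq q q'" "weq (p' @ q') r"
      by (auto simp: mem_wclass)
    then show "r \<in> wclass (p @ q)"
      using weq_trans[OF weq_append[OF _ _ assms]] by (simp add: mem_wclass)
  next
    fix r assume "r \<in> wclass (p @ q)"
    then have "weq (p @ q) r"
      by (simp add: mem_wclass)
    moreover have "p \<in> wclass p" "q \<in> wclass q"
      by (simp_all add: mem_wclass)
    ultimately show "r \<in> {r. \<exists>p'\<in>wclass p. \<exists>q'\<in>wclass q. weq (p' @ q') r}"
      by blast
  qed
  then show ?thesis by (simp add: Lambda_def)
qed

lemma mult_Lambda_loops:
  "p \<in> loops o' \<Longrightarrow> q \<in> loops o' \<Longrightarrow> wclass p \<otimes>\<^bsub>Lambda o'\<^esub> wclass q = wclass (p @ q)"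
  by (simp add: loops_iff mult_Lambda_wclass)

lemma group_Lambda: "group (Lambda o')"
proof (rule groupI)
  fix x y assume "x \<in> carrier (Lambda o')" "y \<in> carrier (Lambda o')"
  then show "x \<otimes>\<^bsub>Lambda o'\<^esub> y \<in> carrier (Lambda o')"
    by (auto simp: carrier_Lambda mult_Lambda_loops append_loops)
next
  show "\<one>\<^bsub>Lambda o'\<^esub> \<in> carrier (Lambda o')"
    by (simp add: one_Lambda carrier_Lambda iota_loops)
next
  fix x y z assume "x \<in> carrier (Lambda o')" "y \<in> carrier (Lambda o')" "z \<in> carrier (Lambda o')"
  then show "x \<otimes>\<^bsub>Lambda o'\<^esub> y \<otimes>\<^bsub>Lambda o'\<^esub> z = x \<otimes>\<^bsub>Lambda o'\<^esub> (y \<otimes>\<^bsub>Lambda o'\<^esub> z)"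
    by (auto simp: carrier_Lambda mult_Lambda_loops append_loops)
next
  fix x assume "x \<in> carrier (Lambda o')"
  then obtain p where p: "p \<in> loops o'" "x = wclass p"
    by (auto simp: carrier_Lambda)
  have "wclass ([iota o'] @ p) = wclass p"
    using weq_iota_left[of p] p by (simp add: loops_iff wclass_eq_iff)
  then show "\<one>\<^bsub>Lambda o'\<^esub> \<otimes>\<^bsub>Lambda o'\<^esub> x = x"
    using p by (simp add: one_Lambda mult_Lambda_loops iota_loops)
  have "wclass (opp_path p @ p) = wclass [iota o']"
    using weq_opp_path_append[of p] p by (simp add: loops_iff wclass_eq_iff)
  then have "wclass (opp_path p) \<otimes>\<^bsub>Lambda o'\<^esub> x = \<one>\<^bsub>Lambda o'\<^esub>"
    using p by (simp add: one_Lambda mult_Lambda_loops opp_path_loops)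
  moreover have "wclass (opp_path p) \<in> carrier (Lambda o')"
    using p by (simp add: carrier_Lambda opp_path_loops)
  ultimately show "\<exists>y\<in>carrier (Lambda o'). y \<otimes>\<^bsub>Lambda o'\<^esub> x = \<one>\<^bsub>Lambda o'\<^esub>"
    by blast
qed

lemma inv_Lambda:
  assumes "p \<in> loops o'"
  shows "inv\<^bsub>Lambda o'\<^esub> (wclass p) = wclass (opp_path p)"
proof (rule group.inv_equality[OF group_Lambda])
  have "wclass (opp_path p @ p) = wclass [iota o']"
    using weq_opp_path_append[of p] assms by (simp add: loops_iff wclass_eq_iff)
  then show "wclass (opp_path p) \<otimes>\<^bsub>Lambda o'\<^esub> wclass p = \<one>\<^bsub>Lambda o'\<^esub>"
    using assms by (simp add: one_Lambda mult_Lambda_loops opp_path_loops)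
qed (use assms in \<open>simp_all add: carrier_Lambda opp_path_loops\<close>)

definition lloops :: "'k::order \<Rightarrow> 'k simp1 list set" where
  "lloops o' = {p \<in> loops o'. \<forall>b\<in>set p. supp b \<le> o'}"

lemma lloops_imp_loops: "p \<in> lloops o' \<Longrightarrow> p \<in> loops o'"
  by (simp add: lloops_def)

lemma append_lloops: "p \<in> lloops o' \<Longrightarrow> q \<in> lloops o' \<Longrightarrow> p @ q \<in> lloops o'"
  by (auto simp: lloops_def append_loops)

lemma opp_path_lloops: "p \<in> lloops o' \<Longrightarrow> opp_path p \<in> lloops o'"
  by (auto simp: lloops_def opp_path_loops)

lemma iota_lloops: "[iota o'] \<in> lloops o'"
  by (simp add: lloops_def iota_loops)

lemma carrier_LambdaL: "carrier (LambdaL o') = wclass ` lloops o'"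
proof
  show "carrier (LambdaL o') \<subseteq> wclass ` lloops o'"
  proof
    fix A assume "A \<in> carrier (LambdaL o')"
    then obtain p0 p where p0: "p0 \<in> loops o'" "A = wclass p0"
      and p: "weq p0 p" "\<forall>b\<in>set p. supp b \<le> o'"
      by (auto simp: LambdaL_def carrier_Lambda mem_wclass)
    have "p \<in> lloops o'"
      using weq_imp_path[OF p(1)] p0 p(2) by (auto simp: loops_iff lloops_def)
    then show "A \<in> wclass ` lloops o'"
      using p0(2) wclass_eqI[OF p(1)] by blast
  qed
  show "wclass ` lloops o' \<subseteq> carrier (LambdaL o')"
    by (auto simp: LambdaL_def carrier_Lambda lloops_def mem_wclass)
qed

lemma carrier_LambdaL_subset: "carrier (LambdaL o') \<subseteq> carrier (Lambda o')"
  by (simp add: LambdaL_def)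

lemma mult_LambdaL [simp]: "x \<otimes>\<^bsub>LambdaL o'\<^esub> y = x \<otimes>\<^bsub>Lambda o'\<^esub> y"
  by (simp add: LambdaL_def)

lemma subgroup_LambdaL: "subgroup (carrier (LambdaL o')) (Lambda o')"
proof (rule group.subgroupI[OF group_Lambda])
  show "carrier (LambdaL o') \<subseteq> carrier (Lambda o')"
    by (rule carrier_LambdaL_subset)
  show "carrier (LambdaL o') \<noteq> {}"
    using iota_lloops by (auto simp: carrier_LambdaL)
next
  fix x assume "x \<in> carrier (LambdaL o')"
  then show "inv\<^bsub>Lambda o'\<^esub> x \<in> carrier (LambdaL o')"
    by (auto simp: carrier_LambdaL inv_Lambda lloops_imp_loops opp_path_lloops)
next
  fix x y assume "x \<in> carrier (LambdaL o')" "y \<in> carrier (LambdaL o')"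
  then show "x \<otimes>\<^bsub>Lambda o'\<^esub> y \<in> carrier (LambdaL o')"
    by (auto simp: carrier_LambdaL mult_Lambda_loops lloops_imp_loops append_lloops)
qed

lemma group_LambdaL: "group (LambdaL o')"
  using subgroup.subgroup_is_group[OF subgroup_LambdaL group_Lambda]
  by (simp add: LambdaL_def)

lemma id_hom_LambdaL_Lambda: "(\<lambda>x. x) \<in> hom (LambdaL o') (Lambda o')"
  using carrier_LambdaL_subset by (auto simp: hom_def)

lemma hom_Lambda_induced:
  assumes F: "\<And>p. p \<in> loops o' \<Longrightarrow> F (wclass p) = wclass (f p)"
    and f_loops: "\<And>p. p \<in> loops o' \<Longrightarrow> f p \<in> loops a"
    and f_append: "\<And>p q. p \<in> loops o' \<Longrightarrow> q \<in> loops o' \<Longrightarrow> weq (f (p @ q)) (f p @ f q)"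
  shows "F \<in> hom (Lambda o') (Lambda a)"
proof (rule homI)
  fix x assume "x \<in> carrier (Lambda o')"
  then show "F x \<in> carrier (Lambda a)"
    using F f_loops by (auto simp: carrier_Lambda)
next
  fix x y assume "x \<in> carrier (Lambda o')" "y \<in> carrier (Lambda o')"
  then obtain p q where pq: "p \<in> loops o'" "q \<in> loops o'" "x = wclass p" "y = wclass q"
    by (auto simp: carrier_Lambda)
  have "F (x \<otimes>\<^bsub>Lambda o'\<^esub> y) = wclass (f (p @ q))"
    using pq F by (simp add: mult_Lambda_loops append_loops)
  also have "\<dots> = wclass (f p @ f q)"
    using f_append pq by (simp add: wclass_eq_iff)
  also have "\<dots> = F x \<otimes>\<^bsub>Lambda a\<^esub> F y"
    using pq F f_loops by (simp add: mult_Lambda_loops)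
  finally show "F (x \<otimes>\<^bsub>Lambda o'\<^esub> y) = F x \<otimes>\<^bsub>Lambda a\<^esub> F y" .
qed

lemma iso_Lambda_induced:
  assumes F: "\<And>p. p \<in> loops o' \<Longrightarrow> F (wclass p) = wclass (f p)"
    and f_loops: "\<And>p. p \<in> loops o' \<Longrightarrow> f p \<in> loops a"
    and f_append: "\<And>p q. p \<in> loops o' \<Longrightarrow> q \<in> loops o' \<Longrightarrow> weq (f (p @ q)) (f p @ f q)"
    and f_inj: "\<And>p q. p \<in> loops o' \<Longrightarrow> q \<in> loops o' \<Longrightarrow> weq (f p) (f q) \<Longrightarrow> weq p q"
    and f_surj: "\<And>q. q \<in> loops a \<Longrightarrow> \<exists>p\<in>loops o'. weq (f p) q"
  shows "F \<in> iso (Lambda o') (Lambda a)"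
proof -
  have "inj_on F (carrier (Lambda o'))"
    using F f_inj by (auto simp: inj_on_def carrier_Lambda wclass_eq_iff)
  moreover have "carrier (Lambda a) \<subseteq> F ` carrier (Lambda o')"
  proof
    fix y assume "y \<in> carrier (Lambda a)"
    then obtain q where q: "q \<in> loops a" "y = wclass q"
      by (auto simp: carrier_Lambda)
    then obtain p where p: "p \<in> loops o'" "weq (f p) q"
      using f_surj by blast
    then have "y = F (wclass p)"
      using q F by (simp add: wclass_eq_iff weq_sym)
    then show "y \<in> F ` carrier (Lambda o')"
      using p by (simp add: carrier_Lambda)
  qed
  moreover have "F ` carrier (Lambda o') \<subseteq> carrier (Lambda a)"
    using F f_loops by (auto simp: carrier_Lambda)
  ultimately show ?thesis
    using hom_Lambda_induced[OF F f_loops f_append] by (auto simp: iso_def bij_betw_def)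
qed

lemma hom_LambdaL_restrict:
  assumes "F \<in> hom (Lambda o') (Lambda a)" "F ` carrier (LambdaL o') \<subseteq> carrier (LambdaL a)"
  shows "F \<in> hom (LambdaL o') (LambdaL a)"
proof (rule homI)
  fix x assume "x \<in> carrier (LambdaL o')"
  then show "F x \<in> carrier (LambdaL a)"
    using assms(2) by blast
next
  fix x y assume "x \<in> carrier (LambdaL o')" "y \<in> carrier (LambdaL o')"
  then have "x \<in> carrier (Lambda o')" "y \<in> carrier (Lambda o')"
    using carrier_LambdaL_subset by blast+
  then show "F (x \<otimes>\<^bsub>LambdaL o'\<^esub> y) = F x \<otimes>\<^bsub>LambdaL a\<^esub> F y"
    by (simp add: hom_mult[OF assms(1)])
qed

lemma iso_LambdaL_restrict:
  assumes "F \<in> iso (Lambda o') (Lambda a)" "F ` carrier (LambdaL o') = carrier (LambdaL a)"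
  shows "F \<in> iso (LambdaL o') (LambdaL a)"
proof -
  have "F \<in> hom (LambdaL o') (LambdaL a)"
    using hom_LambdaL_restrict[of F o' a] assms by (simp add: iso_def)
  moreover have "inj_on F (carrier (Lambda o'))"
    using assms(1) by (simp add: iso_def bij_betw_def)
  then have "inj_on F (carrier (LambdaL o'))"
    using carrier_LambdaL_subset by (rule inj_on_subset)
  ultimately show ?thesis
    using assms(2) by (simp add: iso_def bij_betw_def)
qed

lemma image_LambdaL_induced:
  assumes "\<And>p. p \<in> loops o' \<Longrightarrow> F (wclass p) = wclass (f p)"
    and "\<And>p. p \<in> lloops o' \<Longrightarrow> f p \<in> lloops a"
  shows "F ` carrier (LambdaL o') \<subseteq> carrier (LambdaL a)"
proof
  fix y assume "y \<in> F ` carrier (LambdaL o')"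
  then obtain p where p: "p \<in> lloops o'" "y = F (wclass p)"
    by (auto simp: carrier_LambdaL)
  then have "y = wclass (f p)" "f p \<in> lloops a"
    using assms(1)[OF lloops_imp_loops[OF p(1)]] assms(2)[OF p(1)] by simp_all
  then show "y \<in> carrier (LambdaL a)"
    unfolding carrier_LambdaL by blast
qed

section \<open>Conjugation by a path\<close>

definition conj_path :: "'k simp1 list \<Rightarrow> 'k simp1 list \<Rightarrow> 'k simp1 list" where
  "conj_path c p = c @ p @ opp_path c"

definition conj_class :: "'k::order simp1 list \<Rightarrow> 'k simp1 list set \<Rightarrow> 'k simp1 list set" where
  "conj_class c A = {r. \<exists>p\<in>A. weq (conj_path c p) r}"

lemma lam_eq_conj_class: "lam a o' = conj_class [edge a o']"
  by (simp add: fun_eq_iff lam_def conj_class_def conj_path_def)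

lemma conj_path_loops:
  assumes "is_path c" "p \<in> loops (pstart c)"
  shows "conj_path c p \<in> loops (pend c)"
proof -
  have "is_path (p @ opp_path c)"
    using assms by (simp add: loops_iff is_path_appendI is_path_opp_path is_path_nonempty)
  then show ?thesis
    using assms by (simp add: conj_path_def loops_iff is_path_appendI is_path_nonempty)
qed

lemma weq_conj_path_append:
  assumes c: "is_path c" and p: "p \<in> loops (pstart c)" and q: "q \<in> loops (pstart c)"
  shows "weq (conj_path c (p @ q)) (conj_path c p @ conj_path c q)"
proof -
  define x where "x = q @ opp_path c"
  have x: "is_path x" "pend x = pstart c"
    using q c by (auto simp: x_def loops_iff is_path_appendI is_path_opp_path is_path_nonempty)
  have cx: "is_path (opp_path c @ c @ x)"
    using c x is_path_appendI[OF is_path_opp_path[OF c], of "c @ x"]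
    by (simp add: is_path_appendI is_path_nonempty)
  have "is_path ((c @ p) @ (opp_path c @ c @ x) @ [])"
    using c p cx by (simp add: loops_iff is_path_appendI is_path_nonempty)
  moreover have "weq (opp_path c @ c @ x) x"
    using weq_cancel_left[OF c x(1)] x(2) by simp
  ultimately have "weq ((c @ p) @ (opp_path c @ c @ x) @ []) ((c @ p) @ x @ [])"
    using weq_in_context cx by blast
  then show ?thesis
    by (simp add: conj_path_def x_def weq_sym)
qed

lemma weq_conj_path_cancel:
  assumes c: "is_path c" and p: "p \<in> loops (pstart c)"
  shows "weq (opp_path c @ conj_path c p @ c) p"
proof -
  have oc: "is_path (opp_path c)"
    using c by (rule is_path_opp_path)
  have x: "is_path (p @ opp_path c @ c)"
    using p c oc by (simp add: loops_iff is_path_appendI is_path_nonempty)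
  have "weq (opp_path c @ c @ (p @ opp_path c @ c)) (p @ opp_path c @ c)"
    using weq_cancel_left[OF c x] p by (simp add: loops_iff)
  moreover have "weq (p @ opp_path c @ c) p"
    using weq_cancel_right[OF _ oc, of p] p c by (simp add: loops_iff is_path_nonempty)
  ultimately show ?thesis
    by (simp add: conj_path_def weq_trans)
qed

lemma weq_conj_path_arg:
  assumes "is_path c" "p \<in> loops (pstart c)" "weq p q"
  shows "weq (conj_path c p) (conj_path c q)"
  using weq_in_context[OF assms(3), of c "opp_path c"] conj_path_loops[OF assms(1,2)] assms(2)
  by (simp add: conj_path_def loops_iff)

lemma weq_conj_path_cong:
  assumes c: "is_path c" and cc: "weq c c'" and p: "p \<in> loops (pstart c)"
  shows "weq (conj_path c p) (conj_path c' p)"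
proof -
  have ne: "c \<noteq> []"
    using c by (rule is_path_nonempty)
  have p_oc: "is_path (p @ opp_path c)"
    using c p by (simp add: loops_iff is_path_appendI is_path_opp_path ne)
  have "weq (p @ opp_path c) (p @ opp_path c')"
    using weq_append[OF weq_refl weq_opp_path[OF cc c]] p c is_path_opp_path[OF c]
    by (simp add: loops_iff ne)
  then show ?thesis
    using weq_append[OF cc _ c p_oc] p by (simp add: conj_path_def loops_iff)
qed

lemma conj_class_wclass:
  assumes "is_path c" "p \<in> loops (pstart c)"
  shows "conj_class c (wclass p) = wclass (conj_path c p)"
  unfolding conj_class_def by (rule pointwise_image_wclass) (rule weq_conj_path_arg[OF assms])

lemma iso_conj_class:
  assumes c: "is_path c"
  shows "conj_class c \<in> iso (Lambda (pstart c)) (Lambda (pend c))"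
proof (rule iso_Lambda_induced)
  fix p q assume p: "p \<in> loops (pstart c)" and q: "q \<in> loops (pstart c)"
    and pq: "weq (conj_path c p) (conj_path c q)"
  have cp: "is_path (conj_path c p)" "pstart (conj_path c p) = pend c" "pend (conj_path c p) = pend c"
    using conj_path_loops[OF c p] by (simp_all add: loops_iff)
  have "is_path (conj_path c p @ c)"
    using cp c by (simp add: is_path_appendI)
  then have "is_path (opp_path c @ conj_path c p @ c)"
    using cp c by (simp add: is_path_appendI is_path_opp_path is_path_nonempty)
  then have "weq (opp_path c @ conj_path c p @ c) (opp_path c @ conj_path c q @ c)"
    by (rule weq_in_context[OF pq cp(1)])
  then show "weq p q"
    using weq_conj_path_cancel[OF c p] weq_conj_path_cancel[OF c q] by (blast intro: weq_trans weq_sym)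
next
  fix q assume q: "q \<in> loops (pend c)"
  have oc: "is_path (opp_path c)"
    using c by (rule is_path_opp_path)
  then have "conj_path (opp_path c) q \<in> loops (pstart c)"
    using conj_path_loops[OF oc] q c by (simp add: is_path_nonempty)
  moreover have "weq (conj_path c (conj_path (opp_path c) q)) q"
    using weq_conj_path_cancel[OF oc] q c by (simp add: conj_path_def is_path_nonempty)
  ultimately show "\<exists>p\<in>loops (pstart c). weq (conj_path c p) q" ..
qed (simp_all add: c conj_class_wclass conj_path_loops weq_conj_path_append)

lemma conj_class_conj_class:
  assumes c: "is_path c" and d: "is_path d" and cd: "pstart c = pend d"
    and x: "x \<in> carrier (Lambda (pstart d))"
  shows "conj_class c (conj_class d x) = conj_class (c @ d) x"
proof -
  obtain p where p: "p \<in> loops (pstart d)" "x = wclass p"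
    using x by (auto simp: carrier_Lambda)
  have "conj_path d p \<in> loops (pstart c)"
    using conj_path_loops[OF d p(1)] cd by simp
  then have "conj_class c (conj_class d x) = wclass (conj_path c (conj_path d p))"
    using p c d by (simp add: conj_class_wclass)
  also have "\<dots> = wclass (conj_path (c @ d) p)"
    by (simp add: conj_path_def)
  also have "\<dots> = conj_class (c @ d) x"
    using p c d cd by (simp add: conj_class_wclass is_path_appendI)
  finally show ?thesis .
qed

lemma conj_class_cong:
  assumes c: "is_path c" and cc: "weq c c'" and x: "x \<in> carrier (Lambda (pstart c))"
  shows "conj_class c x = conj_class c' x"
proof -
  obtain p where p: "p \<in> loops (pstart c)" "x = wclass p"
    using x by (auto simp: carrier_Lambda)
  have c': "is_path c'" "pstart c' = pstart c"
    using weq_imp_path[OF cc c] by auto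
  show ?thesis
    using p c' conj_class_wclass[OF c p(1)] conj_class_wclass[OF c'(1)] weq_conj_path_cong[OF c cc p(1)]
    by (simp add: wclass_eq_iff)
qed

lemma lam_iso: "o' \<le> a \<Longrightarrow> lam a o' \<in> iso (Lambda o') (Lambda a)"
  using iso_conj_class[of "[edge a o']"] by (simp add: lam_eq_conj_class pstart_def pend_def)

lemma lam_lam:
  assumes "o' \<le> a" "a \<le> e" "x \<in> carrier (Lambda o')"
  shows "lam e o' x = lam e a (lam a o' x)"
proof -
  have "wstep ([edge e a] @ [edge a o']) [edge e o']"
    using assms by (intro wstep_edge_edgeI[where xs="[]" and ys="[]"]) (auto simp: is_path_Cons pstart_def)
  then have "conj_class ([edge e a] @ [edge a o']) x = conj_class [edge e o'] x"
    using assms by (intro conj_class_cong wstep_imp_weq) (auto simp: is_path_Cons pstart_def)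
  moreover have "conj_class [edge e a] (conj_class [edge a o'] x) = conj_class ([edge e a] @ [edge a o']) x"
    using assms by (intro conj_class_conj_class) (auto simp: pstart_def)
  ultimately show ?thesis
    by (simp add: lam_eq_conj_class)
qed

lemma conj_path_edge_lloops:
  assumes "o' \<le> a" "p \<in> lloops o'"
  shows "conj_path [edge a o'] p \<in> lloops a"
  using assms conj_path_loops[of "[edge a o'] " p] order_trans[OF _ assms(1)]
  by (auto simp: lloops_def conj_path_def pstart_def pend_def)

lemma lam_hom_LambdaL: "o' \<le> a \<Longrightarrow> lam a o' \<in> hom (LambdaL o') (LambdaL a)"
  using lam_iso conj_class_wclass[of "[edge a o']"] conj_path_edge_lloops
  by (intro hom_LambdaL_restrict image_LambdaL_induced[where f="conj_path [edge a o']"])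
    (auto simp: iso_def lam_eq_conj_class pstart_def)

lemma inj_on_lam_LambdaL:
  assumes "o' \<le> a"
  shows "inj_on (lam a o') (carrier (LambdaL o'))"
proof -
  have "inj_on (lam a o') (carrier (Lambda o'))"
    using lam_iso[OF assms] by (simp add: iso_def bij_betw_def)
  then show ?thesis
    using carrier_LambdaL_subset by (rule inj_on_subset)
qed

section \<open>Action of order automorphisms\<close>

lemma simp_act_faces [simp]:
  "d0 (simp_act f b) = f (d0 b)" "d1 (simp_act f b) = f (d1 b)" "supp (simp_act f b) = f (supp b)"
  by (simp_all add: simp_act_def d0_def d1_def supp_def)

lemma simp_act_iota [simp]: "simp_act f (iota a) = iota (f a)"
  by (simp add: simp_act_def iota_def d0_def d1_def supp_def)

lemma simp_act_edge [simp]: "simp_act f (edge o' a) = edge (f o') (f a)"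
  by (simp add: simp_act_def edge_def d0_def d1_def supp_def)

lemma simp_act_opp [simp]: "simp_act f (opp b) = opp (simp_act f b)"
  by (simp add: simp_act_def opp_def d0_def d1_def supp_def)

lemma is_simp1_simp_act: "mono f \<Longrightarrow> is_simp1 b \<Longrightarrow> is_simp1 (simp_act f b)"
  by (simp add: is_simp1_def monoD)

lemma simp_act_comp: "simp_act f \<circ> simp_act g = simp_act (f \<circ> g)"
  by (simp add: fun_eq_iff simp_act_def d0_def d1_def supp_def)

lemma map_simp_act_cancel: "(\<And>x. f (g x) = x) \<Longrightarrow> map (simp_act f) (map (simp_act g) p) = p"
  by (induction p) (simp_all add: simp_act_def d0_def d1_def supp_def)

lemma map_simp_act_opp_path: "map (simp_act f) (opp_path p) = opp_path (map (simp_act f) p)"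
  by (simp add: opp_path_def rev_map)

lemma is_path_map_simp_act: "mono f \<Longrightarrow> is_path p \<Longrightarrow> is_path (map (simp_act f) p)"
  by (auto simp: is_path_def is_simp1_simp_act)

lemma pstart_map_simp_act [simp]: "p \<noteq> [] \<Longrightarrow> pstart (map (simp_act f) p) = f (pstart p)"
  by (simp add: pstart_def last_map)

lemma pend_map_simp_act [simp]: "p \<noteq> [] \<Longrightarrow> pend (map (simp_act f) p) = f (pend p)"
  by (simp add: pend_def hd_map)

lemma map_simp_act_loops: "mono f \<Longrightarrow> p \<in> loops o' \<Longrightarrow> map (simp_act f) p \<in> loops (f o')"
  by (auto simp: loops_iff is_path_map_simp_act is_path_nonempty)

lemma map_simp_act_lloops: "mono f \<Longrightarrow> p \<in> lloops o' \<Longrightarrow> map (simp_act f) p \<in> lloops (f o')"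
  by (auto simp: lloops_def map_simp_act_loops monoD)

lemma wstep_map_simp_act:
  assumes f: "mono f" and w: "wstep p q"
  shows "wstep (map (simp_act f) p) (map (simp_act f) q)"
proof -
  let ?m = "map (simp_act f)"
  have pq: "is_path p" "is_path q" "pstart p = pstart q" "pend p = pend q"
    using wstep_imp_path[OF w] by auto
  then have paths: "is_path (?m p)" "is_path (?m q)" "pstart (?m p) = pstart (?m q)" "pend (?m p) = pend (?m q)"
    by (simp_all add: f is_path_map_simp_act is_path_nonempty)
  from w show ?thesis
  proof (cases rule: wstepE)
    case (iota xs ys a)
    then show ?thesis
      using paths by (intro wstep_insert_iotaI[where xs="?m xs" and ys="?m ys" and a="f a"]) simp_all
  next
    case (edge xs ys o' a e)
    then show ?thesis
      using paths f
      by (intro wstep_edge_edgeI[where xs="?m xs" and ys="?m ys" and o'="f o'" and a="f a" and e="f e"])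
        (simp_all add: monoD)
  next
    case (opp xs ys b)
    then show ?thesis
      using paths by (intro wstep_opp_cancelI[where xs="?m xs" and ys="?m ys" and b="simp_act f b"]) simp_all
  qed
qed

lemma weq_map_simp_act:
  assumes f: "mono f" and w: "weq p q"
  shows "weq (map (simp_act f) p) (map (simp_act f) q)"
  using w unfolding weq_def
proof (induction rule: rtranclp_induct)
  case (step y z)
  from step.hyps(2) have "symclp wstep (map (simp_act f) y) (map (simp_act f) z)"
    by (cases rule: symclpE) (simp_all add: symclp_def wstep_map_simp_act[OF f])
  then show ?case
    using step.IH by (simp add: rtranclp.rtrancl_into_rtrancl)
qed simp

lemma gstar_wclass: "mono f \<Longrightarrow> gstar f (wclass p) = wclass (map (simp_act f) p)"
  unfolding gstar_def by (rule pointwise_image_wclass) (rule weq_map_simp_act)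

lemma order_automorphism_inverse:
  fixes f :: "'k::order \<Rightarrow> 'k"
  assumes f_order: "\<And>x y. x \<le> y \<longleftrightarrow> f x \<le> f y" and f_surj: "surj f"
  obtains h where "mono h" "\<And>x. h (f x) = x" "\<And>x. f (h x) = x"
proof -
  obtain h where fh: "\<And>x. f (h x) = x"
    using f_surj by (metis surjD)
  moreover have "h (f x) = x" for x
    by (metis fh f_order order_antisym order_refl)
  moreover have "mono h"
    by (rule monoI) (metis fh f_order)
  ultimately show thesis
    using that by blast
qed

lemma gstar_iso_Lambda:
  fixes f :: "'k::order \<Rightarrow> 'k"
  assumes f_order: "\<And>x y. x \<le> y \<longleftrightarrow> f x \<le> f y" and f_surj: "surj f"
  shows "gstar f \<in> iso (Lambda o') (Lambda (f o'))"
proof -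
  obtain h where h: "mono h" "\<And>x. h (f x) = x" "\<And>x. f (h x) = x"
    using order_automorphism_inverse[OF f_order f_surj] by blast
  show ?thesis
  proof (rule iso_Lambda_induced[where f="map (simp_act f)"])
    fix p q assume "weq (map (simp_act f) p) (map (simp_act f) q)"
    then show "weq p q"
      using weq_map_simp_act[OF h(1)] map_simp_act_cancel[of h f] h(2) by metis
  next
    fix q assume "q \<in> loops (f o')"
    then have "map (simp_act h) q \<in> loops o'"
      using map_simp_act_loops[OF h(1)] h(2) by metis
    then show "\<exists>p\<in>loops o'. weq (map (simp_act f) p) q"
      using map_simp_act_cancel[of f h q] h(3) by (metis weq_refl)
  qed (use f_order in \<open>simp_all add: mono_def gstar_wclass map_simp_act_loops\<close>)
qed

lemma gstar_image_LambdaL: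
  fixes f :: "'k::order \<Rightarrow> 'k"
  assumes f_order: "\<And>x y. x \<le> y \<longleftrightarrow> f x \<le> f y" and f_surj: "surj f"
  shows "gstar f ` carrier (LambdaL o') = carrier (LambdaL (f o'))"
proof
  have f: "mono f"
    using f_order by (simp add: mono_def)
  show "gstar f ` carrier (LambdaL o') \<subseteq> carrier (LambdaL (f o'))"
    using f by (intro image_LambdaL_induced[where f="map (simp_act f)"])
      (simp_all add: gstar_wclass map_simp_act_lloops)
  obtain h where h: "mono h" "\<And>x. h (f x) = x" "\<And>x. f (h x) = x"
    using order_automorphism_inverse[OF f_order f_surj] by blast
  show "carrier (LambdaL (f o')) \<subseteq> gstar f ` carrier (LambdaL o')"
  proof
    fix y assume "y \<in> carrier (LambdaL (f o'))"
    then obtain q where q: "q \<in> lloops (f o')" "y = wclass q"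
      by (auto simp: carrier_LambdaL)
    then have "map (simp_act h) q \<in> lloops o'"
      using map_simp_act_lloops[OF h(1)] h(2) by metis
    moreover have "gstar f (wclass (map (simp_act h) q)) = y"
      unfolding gstar_wclass[OF f] q(2) by (simp only: map_simp_act_cancel[of f h, OF h(3)])
    ultimately show "y \<in> gstar f ` carrier (LambdaL o')"
      unfolding carrier_LambdaL by blast
  qed
qed

lemma gstar_gstar:
  assumes "mono f" "mono g" "x \<in> carrier (Lambda o')"
  shows "gstar f (gstar g x) = gstar (f \<circ> g) x"
proof -
  have "mono (f \<circ> g)"
    using assms(1,2) by (simp add: mono_def)
  then show ?thesis
    using assms by (auto simp: carrier_Lambda gstar_wclass simp_act_comp)
qed

lemma gstar_lam:
  assumes f: "mono f" and "a \<le> o'" and x: "x \<in> carrier (Lambda a)"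
  shows "gstar f (lam o' a x) = lam (f o') (f a) (gstar f x)"
proof -
  obtain p where p: "p \<in> loops a" "x = wclass p"
    using x by (auto simp: carrier_Lambda)
  have "f a \<le> f o'"
    using f \<open>a \<le> o'\<close> by (rule monoD)
  then have "lam (f o') (f a) (gstar f x) = wclass (conj_path [edge (f o') (f a)] (map (simp_act f) p))"
    using p f map_simp_act_loops[OF f p(1)]
    by (simp add: lam_eq_conj_class gstar_wclass conj_class_wclass pstart_def)
  moreover have "gstar f (lam o' a x) = wclass (map (simp_act f) (conj_path [edge o' a] p))"
    using p f \<open>a \<le> o'\<close> by (simp add: lam_eq_conj_class gstar_wclass conj_class_wclass pstart_def)
  ultimately show ?thesis
    by (simp add: conj_path_def map_simp_act_opp_path)
qed

lemma symmetry_group_order_automorphism: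
  assumes "symmetry_group G \<phi>" "g \<in> carrier G"
  shows "x \<le> y \<longleftrightarrow> \<phi> g x \<le> \<phi> g y" "surj (\<phi> g)"
proof -
  show "x \<le> y \<longleftrightarrow> \<phi> g x \<le> \<phi> g y"
    using assms unfolding symmetry_group_def by blast
  have "group_action G UNIV \<phi>"
    using assms(1) unfolding symmetry_group_def by blast
  then show "surj (\<phi> g)"
    using assms(2) by (rule group_action.surj_prop)
qed

lemma symmetry_group_mult:
  assumes "symmetry_group G \<phi>" "g \<in> carrier G" "h \<in> carrier G"
  shows "\<phi> (h \<otimes>\<^bsub>G\<^esub> g) = \<phi> h \<circ> \<phi> g"
proof
  have "group_action G UNIV \<phi>"
    using assms(1) unfolding symmetry_group_def by blast
  then show "\<phi> (h \<otimes>\<^bsub>G\<^esub> g) x = (\<phi> h \<circ> \<phi> g) x" for x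
    using assms(2,3) by (simp add: group_action.composition_rule)
qed

theorem proposition3p4:
  assumes conn: "path_connected_poset TYPE('k::order)"
  shows
   "\<comment> \<open>(i) net bundle (Lambda, lam)\<close>
    (\<forall>o'::'k. group (Lambda o')) \<and>
    (\<forall>o' a::'k. o' \<le> a \<longrightarrow> lam a o' \<in> iso (Lambda o') (Lambda a)) \<and>
    (\<forall>o' a e::'k. o' \<le> a \<longrightarrow> a \<le> e \<longrightarrow>
        (\<forall>x\<in>carrier (Lambda o'). lam e o' x = lam e a (lam a o' x))) \<and>
    \<comment> \<open>net (LambdaL, lam)\<close>
    (\<forall>o'::'k. group (LambdaL o')) \<and>
    (\<forall>o' a::'k. o' \<le> a \<longrightarrow> lam a o' \<in> hom (LambdaL o') (LambdaL a) \<and>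
        inj_on (lam a o') (carrier (LambdaL o'))) \<and>
    (\<forall>o' a e::'k. o' \<le> a \<longrightarrow> a \<le> e \<longrightarrow>
        (\<forall>x\<in>carrier (LambdaL o'). lam e o' x = lam e a (lam a o' x))) \<and>
    \<comment> \<open>the inclusions form a monomorphism\<close>
    (\<forall>o'::'k. (\<lambda>x. x) \<in> hom (LambdaL o') (Lambda o') \<and>
        inj_on (\<lambda>x. x) (carrier (LambdaL o'))) \<and>
    (\<forall>o' a::'k. o' \<le> a \<longrightarrow>
        (\<forall>x\<in>carrier (LambdaL o'). lam a o' ((\<lambda>x. x) x) = (\<lambda>x. x) (lam a o' x))) \<and>
    \<comment> \<open>(ii) G-covariance\<close>
    (\<forall>(G::('g, 'b) monoid_scheme) (\<phi>::'g \<Rightarrow> 'k \<Rightarrow> 'k). symmetry_group G \<phi> \<longrightarrow>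
       (\<forall>g\<in>carrier G. \<forall>o'. gstar (\<phi> g) \<in> iso (Lambda o') (Lambda (\<phi> g o')) \<and>
                          gstar (\<phi> g) \<in> iso (LambdaL o') (LambdaL (\<phi> g o'))) \<and>
       (\<forall>g\<in>carrier G. \<forall>h\<in>carrier G. \<forall>o'.
          (\<forall>x\<in>carrier (Lambda o'). gstar (\<phi> h) (gstar (\<phi> g) x) = gstar (\<phi> (h \<otimes>\<^bsub>G\<^esub> g)) x) \<and>
          (\<forall>x\<in>carrier (LambdaL o'). gstar (\<phi> h) (gstar (\<phi> g) x) = gstar (\<phi> (h \<otimes>\<^bsub>G\<^esub> g)) x)) \<and>
       (\<forall>g\<in>carrier G. \<forall>o' a. a \<le> o' \<longrightarrow>
          (\<forall>x\<in>carrier (Lambda a). gstar (\<phi> g) (lam o' a x) = lam (\<phi> g o') (\<phi> g a) (gstar (\<phi> g) x)) \<and>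
          (\<forall>x\<in>carrier (LambdaL a). gstar (\<phi> g) (lam o' a x) = lam (\<phi> g o') (\<phi> g a) (gstar (\<phi> g) x))) \<and>
       (\<forall>g\<in>carrier G. \<forall>o'. \<forall>x\<in>carrier (LambdaL o').
          gstar (\<phi> g) ((\<lambda>x. x) x) = (\<lambda>x. x) (gstar (\<phi> g) x)))"
proof -
  have covariance:
    "mono (\<phi> g)" "gstar (\<phi> g) \<in> iso (Lambda o') (Lambda (\<phi> g o'))"
    "gstar (\<phi> g) \<in> iso (LambdaL o') (LambdaL (\<phi> g o'))"
    if "symmetry_group G \<phi>" "g \<in> carrier G"
    for G :: "('g, 'b) monoid_scheme" and \<phi> :: "'g \<Rightarrow> 'k \<Rightarrow> 'k" and g o'
  proof -
    note aut = symmetry_group_order_automorphism[OF that]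
    show "mono (\<phi> g)"
      by (rule monoI) (use aut(1) in blast)
    show "gstar (\<phi> g) \<in> iso (Lambda o') (Lambda (\<phi> g o'))"
      using aut by (rule gstar_iso_Lambda)
    then show "gstar (\<phi> g) \<in> iso (LambdaL o') (LambdaL (\<phi> g o'))"
      using aut by (intro iso_LambdaL_restrict gstar_image_LambdaL)
  qed
  have covariance_mult: "gstar (\<phi> h) (gstar (\<phi> g) x) = gstar (\<phi> (h \<otimes>\<^bsub>G\<^esub> g)) x"
    if "symmetry_group G \<phi>" "g \<in> carrier G" "h \<in> carrier G" "x \<in> carrier (Lambda o')"
    for G :: "('g, 'b) monoid_scheme" and \<phi> :: "'g \<Rightarrow> 'k \<Rightarrow> 'k" and g h x o'
    using that covariance(1) by (simp add: gstar_gstar symmetry_group_mult comp_def)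
  show ?thesis
    by (intro conjI allI impI ballI)
      (rule refl lam_lam covariance_mult gstar_lam; blast intro: covariance carrier_LambdaL_subset[THEN subsetD] |
       blast intro: group_Lambda lam_iso group_LambdaL lam_hom_LambdaL inj_on_lam_LambdaL
         id_hom_LambdaL_Lambda inj_on_id2 covariance)+
qed

end
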